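(* Let $X=\Delta([a,b])^S$. There is a sequence of experiments $\Sigma_\infty=\{B_i\}_{i\in\mathbf N}$ (satisfying the standing assumptions below) with the following property: whenever $\succeq^*$ is a continuous, weakly monotone preference on $X$, and for each $k\in\mathbf N$, $\succeq^k$ is a continuous, weakly monotone preference on $X$ that strongly rationalizes the choice function $(\Sigma_k,c_{\succeq^*})$ generated by $\succeq^*$, then $\succeq^k\to\succeq^*$ in the topology of closed convergence.
   Context: $S$ is a finite nonempty set, $a<b$ reals, $\Delta([a,b])$ the set of Borel probability measures on $[a,b]$ with the topology of weak convergence, $X=\Delta([a,b])^S$ with the product topology. For $p,q\in\Delta([a,b])$, $p\ge q$ means $p$ first-order stochastically dominates $q$ ($\int h\,dp\ge\int h\,dq$ for all bounded continuous nondecreasing $h$); for acts $f\ge g$ iff $f(s)\ge g(s)$ for every $s$. A preference on $X$ is a complete, transitive relation closed in $X\times X$; it is weakly monotone if $f\ge g$ implies $f\succeq g$. A sequence of experiments is a sequence $\Sigma_\infty=\{B_i\}_{i\in\mathbf N}$ of unordered pairs $B_i=\{x_i,y_i\}\subseteq X$; $\Sigma_k=\{B_1,\dots,B_k\}$, and $B=\bigcup_i B_i$. Standing assumptions: $B$ is dense in $X$, and for any $x,y\in B$ there is $k$ with $B_k=\{x,y\}$. For a preference $\succeq$ and a family $\Sigma$ of finite sets, the generated choice function is $c_\succeq(A)=\{x\in A:x\succeq y\ \forall y\in A\}$, $A\in\Sigma$. A preference $\succeq^k$ strongly rationalizes a choice function $(\Sigma_k,c)$ if $c(B_i)=c_{\succeq^k}(B_i)$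 for all $B_i\in\Sigma_k$. Closed convergence: for closed sets $F^n\subseteq X\times X$, $\mathrm{Li}$ is the set of points every neighborhood of which meets $F^n$ for all large $n$, $\mathrm{Ls}$ the set of points every neighborhood of which meets $F^n$ for infinitely many $n$; $F^n\to F$ iff $\mathrm{Li}=F=\mathrm{Ls}$. *)

theory Defs
  imports "HOL-Probability.Probability"
begin

text \<open>Borel probability measures on [a,b], represented as Borel probability
measures on the real line giving full mass to [a,b].\<close>
definition Delta :: "real \<Rightarrow> real \<Rightarrow> real measure set" where
  "Delta a b = {p. sets p = sets borel \<and> prob_space p \<and> emeasure p {a..b} = 1}"

definition weak_top :: "real \<Rightarrow> real \<Rightarrow> real measure topology" where
  "weak_top a b = topology_generated_by
     {{p \<in> Delta a b. integral\<^sup>L p h \<in> U} | (h :: real \<Rightarrow> real) U.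
        continuous_on UNIV h \<and> bounded (range h) \<and> open U}"

definition act_top :: "real \<Rightarrow> real \<Rightarrow> ('s \<Rightarrow> real measure) topology" where
  "act_top a b = product_topology (\<lambda>_. weak_top a b) UNIV"

definition fosd :: "real measure \<Rightarrow> real measure \<Rightarrow> bool" where
  "fosd p q \<longleftrightarrow> (\<forall>h::real \<Rightarrow> real. continuous_on UNIV h \<and> bounded (range h) \<and> mono h
      \<longrightarrow> integral\<^sup>L p h \<ge> integral\<^sup>L q h)"

definition act_ge :: "('s \<Rightarrow> real measure) \<Rightarrow> ('s \<Rightarrow> real measure) \<Rightarrow> bool" where
  "act_ge f g \<longleftrightarrow> (\<forall>s. fosd (f s) (g s))"

text \<open>A preference on topological space T: complete, transitive, closed in T x T.
(x,y) in R means x is weakly preferred to y.\<close>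
definition preference :: "'a topology \<Rightarrow> ('a \<times> 'a) set \<Rightarrow> bool" where
  "preference T R \<longleftrightarrow> R \<subseteq> topspace T \<times> topspace T
     \<and> (\<forall>x\<in>topspace T. \<forall>y\<in>topspace T. (x,y) \<in> R \<or> (y,x) \<in> R)
     \<and> trans R
     \<and> closedin (prod_topology T T) R"

definition weakly_monotone :: "real \<Rightarrow> real \<Rightarrow> (('s \<Rightarrow> real measure) \<times> ('s \<Rightarrow> real measure)) set \<Rightarrow> bool" where
  "weakly_monotone a b R \<longleftrightarrow> (\<forall>f\<in>topspace (act_top a b). \<forall>g\<in>topspace (act_top a b).
      act_ge f g \<longrightarrow> (f,g) \<in> R)"

definition choice :: "('a \<times> 'a) set \<Rightarrow> 'a set \<Rightarrow> 'a set" where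
  "choice R A = {x\<in>A. \<forall>y\<in>A. (x,y) \<in> R}"

definition Li :: "'a topology \<Rightarrow> (nat \<Rightarrow> 'a set) \<Rightarrow> 'a set" where
  "Li T F = {z\<in>topspace T. \<forall>U. openin T U \<and> z \<in> U \<longrightarrow> (\<forall>\<^sub>F n in sequentially. F n \<inter> U \<noteq> {})}"

definition Ls :: "'a topology \<Rightarrow> (nat \<Rightarrow> 'a set) \<Rightarrow> 'a set" where
  "Ls T F = {z\<in>topspace T. \<forall>U. openin T U \<and> z \<in> U \<longrightarrow> (\<exists>\<^sub>F n in sequentially. F n \<inter> U \<noteq> {})}"

definition closed_conv :: "'a topology \<Rightarrow> (nat \<Rightarrow> 'a set) \<Rightarrow> 'a set \<Rightarrow> bool" where
  "closed_conv T F G \<longleftrightarrow> Li T F = G \<and> Ls T F = G"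

end

theory Submission
  imports Defs
begin

text \<open>Distributions with rational weights on a uniform grid of \<open>[a,b]\<close> form a countable set,
  and so do the acts built from them; the experiments run through all pairs of such acts.
  These acts bracket the act space: in every neighbourhood of an act \<open>f\<close> there is one that
  dominates every act of some smaller neighbourhood of \<open>f\<close>, and one that is dominated by all of
  them. Coordinatewise it is obtained by rounding, up or down, the values at the grid points of a
  continuous ramp version of the survival function; since the rounding error is uniformly small
  and the ramps are bounded continuous, the resulting grid measure is weakly close, and the
  strict margin left by rounding persists on a weak neighbourhood.

  By monotonicity, eventual agreement of \<open>\<succeq>\<^sup>k\<close> with \<open>\<succeq>\<^sup>*\<close> on each grid pair yields closed
  convergence. If \<open>f \<succeq>\<^sup>* g\<close>, grid acts \<open>f' \<ge> f\<close> and \<open>g' \<le> g\<close> close to \<open>f, g\<close> satisfy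
  \<open>f' \<succeq>\<^sup>k g'\<close> for large \<open>k\<close>. If not, closedness of \<open>\<succeq>\<^sup>*\<close> yields grid acts \<open>f'\<close> above a
  neighbourhood of \<open>f\<close> and \<open>g'\<close> below a neighbourhood of \<open>g\<close> with \<open>f' \<not>\<succeq>\<^sup>* g'\<close>; for large \<open>k\<close>,
  transitivity then forbids \<open>u \<succeq>\<^sup>k v\<close> for all \<open>u\<close>, \<open>v\<close> in these neighbourhoods.\<close>

section \<open>Closed convergence from bracketing by a countable set\<close>

definition monotone_wrt :: "'a topology \<Rightarrow> ('a \<Rightarrow> 'a \<Rightarrow> bool) \<Rightarrow> ('a \<times> 'a) set \<Rightarrow> bool" where
  "monotone_wrt T ge R \<longleftrightarrow> (\<forall>x\<in>topspace T. \<forall>y\<in>topspace T. ge x y \<longrightarrow> (x, y) \<in> R)"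

definition dominates_locally :: "'a topology \<Rightarrow> ('a \<Rightarrow> 'a \<Rightarrow> bool) \<Rightarrow> 'a set \<Rightarrow> bool" where
  "dominates_locally T ge D \<longleftrightarrow> (\<forall>x U. openin T U \<and> x \<in> U \<longrightarrow>
     (\<exists>d\<in>D \<inter> U. \<exists>W. openin T W \<and> x \<in> W \<and> (\<forall>z\<in>W. ge d z)))"

definition brackets :: "'a topology \<Rightarrow> ('a \<Rightarrow> 'a \<Rightarrow> bool) \<Rightarrow> 'a set \<Rightarrow> bool" where
  "brackets T ge D \<longleftrightarrow>
     D \<subseteq> topspace T \<and> dominates_locally T ge D \<and> dominates_locally T (\<lambda>x y. ge y x) D"

lemma dominates_locallyE:
  assumes "dominates_locally T ge D" "openin T U" "x \<in> U"
  obtains d W where "d \<in> D" "d \<in> U" "openin T W" "x \<in> W" "\<And>z. z \<in> W \<Longrightarrow> ge d z"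
proof -
  from assms(1) have "\<forall>x U. openin T U \<and> x \<in> U \<longrightarrow>
      (\<exists>d\<in>D \<inter> U. \<exists>W. openin T W \<and> x \<in> W \<and> (\<forall>z\<in>W. ge d z))"
    by (simp add: dominates_locally_def)
  then have "\<exists>d\<in>D \<inter> U. \<exists>W. openin T W \<and> x \<in> W \<and> (\<forall>z\<in>W. ge d z)"
    using assms(2,3) by blast
  then show thesis using that by blast
qed

lemma brackets_subset: "brackets T ge D \<Longrightarrow> D \<subseteq> topspace T"
  by (simp add: brackets_def)

lemma monotone_wrtD:
  "monotone_wrt T ge R \<Longrightarrow> x \<in> topspace T \<Longrightarrow> y \<in> topspace T \<Longrightarrow> ge x y \<Longrightarrow> (x, y) \<in> R"
  by (simp add: monotone_wrt_def)

lemma preference_subset: "preference T R \<Longrightarrow> R \<subseteq> topspace T \<times> topspace T"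
  by (simp add: preference_def)

lemma preference_refl: "preference T R \<Longrightarrow> x \<in> topspace T \<Longrightarrow> (x, x) \<in> R"
  unfolding preference_def by blast

lemma preference_trans: "preference T R \<Longrightarrow> (x, y) \<in> R \<Longrightarrow> (y, z) \<in> R \<Longrightarrow> (x, z) \<in> R"
  unfolding preference_def trans_def by blast

lemma closure_of_eq_topspace_if_dominates_locally:
  assumes "dominates_locally T ge D"
  shows "T closure_of D = topspace T"
proof
  show "T closure_of D \<subseteq> topspace T" by (rule closure_of_subset_topspace)
  show "topspace T \<subseteq> T closure_of D"
  proof
    fix x assume "x \<in> topspace T"
    moreover have "\<exists>y. y \<in> D \<and> y \<in> U" if "x \<in> U" "openin T U" for U
      using dominates_locallyE[OF assms that(2,1)] by metis
    ultimately show "x \<in> T closure_of D" unfolding in_closure_of by blast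
  qed
qed

lemma subset_Li_if_brackets:
  assumes D: "brackets T ge D" and Rstar: "preference T Rstar" "monotone_wrt T ge Rstar"
    and agree: "\<And>d1 d2. d1 \<in> D \<Longrightarrow> d2 \<in> D \<Longrightarrow>
      \<forall>\<^sub>F n in sequentially. (d1, d2) \<in> R n \<longleftrightarrow> (d1, d2) \<in> Rstar"
  shows "Rstar \<subseteq> Li (prod_topology T T) R"
proof (intro subrelI)
  have above: "dominates_locally T ge D" and below: "dominates_locally T (\<lambda>x y. ge y x) D"
    using D by (simp_all add: brackets_def)
  fix x y assume xy: "(x, y) \<in> Rstar"
  then have top: "x \<in> topspace T" "y \<in> topspace T"
    using preference_subset[OF Rstar(1)] by auto
  show "(x, y) \<in> Li (prod_topology T T) R"
    unfolding Li_def
  proof (intro CollectI conjI allI impI)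
    show "(x, y) \<in> topspace (prod_topology T T)" using top by simp
    fix Z assume "openin (prod_topology T T) Z \<and> (x, y) \<in> Z"
    then obtain U V where UV: "openin T U" "openin T V" "x \<in> U" "y \<in> V" "U \<times> V \<subseteq> Z"
      unfolding openin_prod_topology_alt by blast
    obtain d1 W1 where d1: "d1 \<in> D" "d1 \<in> U" "openin T W1" "x \<in> W1"
      "\<And>z. z \<in> W1 \<Longrightarrow> ge d1 z"
      using dominates_locallyE[OF above UV(1,3)] by blast
    obtain d2 W2 where d2: "d2 \<in> D" "d2 \<in> V" "openin T W2" "y \<in> W2"
      "\<And>z. z \<in> W2 \<Longrightarrow> ge z d2"
      using dominates_locallyE[OF below UV(2,4)] by blast
    have "(d1, x) \<in> Rstar" "(y, d2) \<in> Rstar"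
      using monotone_wrtD[OF Rstar(2)] brackets_subset[OF D] top d1 d2 by blast+
    then have "(d1, d2) \<in> Rstar"
      using xy preference_trans[OF Rstar(1)] by blast
    have "\<forall>\<^sub>F n in sequentially. (d1, d2) \<in> R n"
      using agree[OF d1(1) d2(1)] by (rule eventually_mono) (simp add: \<open>(d1, d2) \<in> Rstar\<close>)
    then show "\<forall>\<^sub>F n in sequentially. R n \<inter> Z \<noteq> {}"
      by (rule eventually_mono) (use UV(5) d1(2) d2(2) in blast)
  qed
qed

lemma Ls_subset_if_brackets:
  assumes D: "brackets T ge D" and closed: "closedin (prod_topology T T) Rstar"
    and R: "\<forall>\<^sub>F n in sequentially. trans (R n) \<and> monotone_wrt T ge (R n)"
    and agree: "\<And>d1 d2. d1 \<in> D \<Longrightarrow> d2 \<in> D \<Longrightarrow>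
      \<forall>\<^sub>F n in sequentially. (d1, d2) \<in> R n \<longleftrightarrow> (d1, d2) \<in> Rstar"
  shows "Ls (prod_topology T T) R \<subseteq> Rstar"
proof (intro subrelI)
  have above: "dominates_locally T ge D" and below: "dominates_locally T (\<lambda>x y. ge y x) D"
    using D by (simp_all add: brackets_def)
  fix x y assume xy: "(x, y) \<in> Ls (prod_topology T T) R"
  show "(x, y) \<in> Rstar"
  proof (rule ccontr)
    assume "(x, y) \<notin> Rstar"
    define C where "C = topspace (prod_topology T T) - Rstar"
    have "(x, y) \<in> C" using xy \<open>(x, y) \<notin> Rstar\<close> by (simp add: C_def Ls_def)
    moreover have "openin (prod_topology T T) C"
      using closed by (simp add: C_def closedin_def)
    ultimately have "\<exists>U V. openin T U \<and> openin T V \<and> x \<in> U \<and> y \<in> V \<and> U \<times> V \<subseteq> C"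
      unfolding openin_prod_topology_alt by simp
    then obtain U V where UV: "openin T U" "openin T V" "x \<in> U" "y \<in> V" "U \<times> V \<subseteq> C"
      by blast
    obtain d1 W1 where d1: "d1 \<in> D" "d1 \<in> U" "openin T W1" "x \<in> W1"
      "\<And>z. z \<in> W1 \<Longrightarrow> ge d1 z"
      using dominates_locallyE[OF above UV(1,3)] by blast
    obtain d2 W2 where d2: "d2 \<in> D" "d2 \<in> V" "openin T W2" "y \<in> W2"
      "\<And>z. z \<in> W2 \<Longrightarrow> ge z d2"
      using dominates_locallyE[OF below UV(2,4)] by blast
    have "(d1, d2) \<in> C" using UV(5) d1(2) d2(2) by blast
    then have "(d1, d2) \<notin> Rstar" by (simp add: C_def)
    have "\<forall>\<^sub>F n in sequentially. (d1, d2) \<notin> R n \<and> trans (R n) \<and> monotone_wrt T ge (R n)"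
      using eventually_conj[OF agree[OF d1(1) d2(1)] R]
      by (rule eventually_mono) (simp add: \<open>(d1, d2) \<notin> Rstar\<close>)
    then obtain N where N: "\<And>n. n \<ge> N \<Longrightarrow> (d1, d2) \<notin> R n \<and> trans (R n) \<and> monotone_wrt T ge (R n)"
      unfolding eventually_sequentially by blast
    have "openin (prod_topology T T) (W1 \<times> W2) \<and> (x, y) \<in> W1 \<times> W2"
      using d1(3,4) d2(3,4) by (simp add: openin_prod_Times_iff)
    with xy have "\<exists>\<^sub>F n in sequentially. R n \<inter> (W1 \<times> W2) \<noteq> {}"
      unfolding Ls_def by simp
    then obtain n where "n \<ge> N" "R n \<inter> (W1 \<times> W2) \<noteq> {}"
      unfolding frequently_sequentially by blast
    then obtain u v where uv: "(u, v) \<in> R n" "u \<in> W1" "v \<in> W2"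
      by auto
    have n: "(d1, d2) \<notin> R n" "trans (R n)" "monotone_wrt T ge (R n)"
      using N \<open>n \<ge> N\<close> by simp_all
    have "u \<in> topspace T" "v \<in> topspace T"
      using uv(2,3) openin_subset[OF d1(3)] openin_subset[OF d2(3)] by blast+
    then have "(d1, u) \<in> R n" "(v, d2) \<in> R n"
      using monotone_wrtD[OF n(3)] brackets_subset[OF D] d1 d2 uv(2,3) by blast+
    then show False using uv(1) n(1,2) unfolding trans_def by blast
  qed
qed

lemma closed_conv_if_brackets:
  assumes D: "brackets T ge D" and Rstar: "preference T Rstar" "monotone_wrt T ge Rstar"
    and R: "\<forall>\<^sub>F n in sequentially. preference T (R n) \<and> monotone_wrt T ge (R n)"
    and agree: "\<And>d1 d2. d1 \<in> D \<Longrightarrow> d2 \<in> D \<Longrightarrow>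
      \<forall>\<^sub>F n in sequentially. (d1, d2) \<in> R n \<longleftrightarrow> (d1, d2) \<in> Rstar"
  shows "closed_conv (prod_topology T T) R Rstar"
proof -
  have "Li (prod_topology T T) R \<subseteq> Ls (prod_topology T T) R"
    unfolding Li_def Ls_def by (auto intro: eventually_frequently)
  moreover have "Rstar \<subseteq> Li (prod_topology T T) R"
    using D Rstar agree by (rule subset_Li_if_brackets)
  moreover have "Ls (prod_topology T T) R \<subseteq> Rstar"
  proof (rule Ls_subset_if_brackets[OF D _ _ agree])
    show "closedin (prod_topology T T) Rstar" using Rstar(1) by (simp add: preference_def)
    show "\<forall>\<^sub>F n in sequentially. trans (R n) \<and> monotone_wrt T ge (R n)"
      using R by (rule eventually_mono) (simp add: preference_def)
  qed
  ultimately show ?thesis unfolding closed_conv_def by blast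
qed

definition pair_experiments :: "('c::countable \<Rightarrow> 'a) \<Rightarrow> nat \<Rightarrow> 'a set" where
  "pair_experiments e i =
     (case i of 0 \<Rightarrow> {} | Suc j \<Rightarrow> (case from_nat j of (c1, c2) \<Rightarrow> {e c1, e c2}))"

lemma pair_experiments_to_nat: "pair_experiments e (Suc (to_nat (c1, c2))) = {e c1, e c2}"
  by (simp add: pair_experiments_def)

lemma pair_experiments_Suc: "\<exists>c1 c2. pair_experiments e (Suc j) = {e c1, e c2}"
  by (simp add: pair_experiments_def split: prod.split) blast

lemma Union_pair_experiments: "(\<Union>i\<in>{1..}. pair_experiments e i) = range e"
proof
  show "(\<Union>i\<in>{1..}. pair_experiments e i) \<subseteq> range e"
  proof
    fix x assume "x \<in> (\<Union>i\<in>{1..}. pair_experiments e i)"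
    then obtain i where "i \<ge> 1" "x \<in> pair_experiments e i" by blast
    then obtain j where "x \<in> pair_experiments e (Suc j)" by (cases i) auto
    then show "x \<in> range e" using pair_experiments_Suc[of e j] by auto
  qed
  show "range e \<subseteq> (\<Union>i\<in>{1..}. pair_experiments e i)"
  proof
    fix x assume "x \<in> range e"
    then obtain c where "x = e c" by blast
    then have "x \<in> pair_experiments e (Suc (to_nat (c, c)))" by (simp add: pair_experiments_to_nat)
    then show "x \<in> (\<Union>i\<in>{1..}. pair_experiments e i)" by force
  qed
qed

lemma choice_pair_eq_iff:
  assumes "(x, x) \<in> R" "(x, x) \<in> R'" "choice R {x, y} = choice R' {x, y}"
  shows "(x, y) \<in> R \<longleftrightarrow> (x, y) \<in> R'"
proof -
  have "x \<in> choice R {x, y} \<longleftrightarrow> (x, y) \<in> R" "x \<in> choice R' {x, y} \<longleftrightarrow> (x, y) \<in> R'"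
    using assms(1,2) by (auto simp: choice_def)
  then show ?thesis using assms(3) by simp
qed

lemma closed_conv_pair_experiments:
  assumes D: "brackets T ge (range e)" and Rstar: "preference T Rstar" "monotone_wrt T ge Rstar"
    and R: "\<forall>k\<ge>1. preference T (R k) \<and> monotone_wrt T ge (R k) \<and>
      (\<forall>i\<in>{1..k}. choice (R k) (pair_experiments e i) = choice Rstar (pair_experiments e i))"
  shows "closed_conv (prod_topology T T) R Rstar"
proof (rule closed_conv_if_brackets[OF D Rstar])
  show "\<forall>\<^sub>F n in sequentially. preference T (R n) \<and> monotone_wrt T ge (R n)"
    unfolding eventually_sequentially using R by blast
  fix d1 d2 assume "d1 \<in> range e" "d2 \<in> range e"
  then obtain c1 c2 where d: "d1 = e c1" "d2 = e c2" by blast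
  have d1: "d1 \<in> topspace T" using brackets_subset[OF D] d by auto
  show "\<forall>\<^sub>F n in sequentially. (d1, d2) \<in> R n \<longleftrightarrow> (d1, d2) \<in> Rstar"
    unfolding eventually_sequentially
  proof (intro exI allI impI)
    fix n assume n: "Suc (to_nat (c1, c2)) \<le> n"
    then have "preference T (R n)"
      and "choice (R n) (pair_experiments e (Suc (to_nat (c1, c2))))
        = choice Rstar (pair_experiments e (Suc (to_nat (c1, c2))))"
      using R by auto
    then show "(d1, d2) \<in> R n \<longleftrightarrow> (d1, d2) \<in> Rstar"
      using d d1 preference_refl[OF _ d1] Rstar(1)
      by (intro choice_pair_eq_iff) (simp_all add: pair_experiments_to_nat)
  qed
qed

section \<open>Integration over \<open>Delta a b\<close> and the weak topology\<close>

definition bounded_continuous :: "(real \<Rightarrow> real) \<Rightarrow> bool" where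
  "bounded_continuous h \<longleftrightarrow> continuous_on UNIV h \<and> bounded (range h)"

lemma bounded_continuous_bound:
  assumes "bounded_continuous h"
  obtains B where "\<And>x. \<bar>h x\<bar> \<le> B"
  using assms unfolding bounded_continuous_def bounded_iff by auto

lemma bounded_continuous_const: "bounded_continuous (\<lambda>x. c)"
  by (simp add: bounded_continuous_def)

lemma bounded_continuous_diff:
  "bounded_continuous f \<Longrightarrow> bounded_continuous g \<Longrightarrow> bounded_continuous (\<lambda>x. f x - g x)"
  unfolding bounded_continuous_def by (auto intro: continuous_on_diff bounded_minus_comp)

lemma bounded_continuous_mult_const:
  "bounded_continuous f \<Longrightarrow> bounded_continuous (\<lambda>x. f x * c)"
  using bounded_scaleR_comp[of f UNIV c] unfolding bounded_continuous_def
  by (auto intro: continuous_intros simp: mult.commute)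

lemma bounded_continuous_sum:
  "finite I \<Longrightarrow> (\<And>i. i \<in> I \<Longrightarrow> bounded_continuous (f i)) \<Longrightarrow>
     bounded_continuous (\<lambda>x. \<Sum>i\<in>I. f i x)"
  by (induction I rule: finite_induct)
    (auto simp: bounded_continuous_def intro: continuous_on_add bounded_plus_comp)

lemma prob_space_Delta: "p \<in> Delta a b \<Longrightarrow> prob_space p"
  by (simp add: Delta_def)

lemma AE_Delta:
  assumes "p \<in> Delta a b"
  shows "AE x in p. x \<in> {a..b}"
proof -
  interpret prob_space p using assms by (rule prob_space_Delta)
  have "{a..b} \<in> sets p" "emeasure p {a..b} = 1" using assms by (simp_all add: Delta_def)
  then show ?thesis by (intro AE_prob_1) (auto simp: emeasure_eq_measure)
qed

lemma integrable_Delta: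
  assumes "p \<in> Delta a b" "bounded_continuous h"
  shows "integrable p h"
proof -
  interpret prob_space p using assms(1) by (rule prob_space_Delta)
  obtain B where "\<And>x. \<bar>h x\<bar> \<le> B" using bounded_continuous_bound[OF assms(2)] by blast
  moreover have "h \<in> borel_measurable p"
    using assms by (simp add: Delta_def bounded_continuous_def borel_measurable_continuous_onI
        measurable_cong_sets[of p borel])
  ultimately show ?thesis by (intro integrable_const_bound[where B=B]) auto
qed

lemma integral_mono_Delta:
  assumes "p \<in> Delta a b" "bounded_continuous f" "bounded_continuous g"
    "\<And>x. x \<in> {a..b} \<Longrightarrow> f x \<le> g x"
  shows "integral\<^sup>L p f \<le> integral\<^sup>L p g"
  using AE_Delta[OF assms(1)] assms by (intro integral_mono_AE integrable_Delta) (auto elim: AE_mp)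

lemma integral_const_Delta: "p \<in> Delta a b \<Longrightarrow> integral\<^sup>L p (\<lambda>x. c) = (c::real)"
  using prob_space.prob_space[OF prob_space_Delta] by simp

lemma abs_integral_le_Delta:
  assumes "p \<in> Delta a b" "bounded_continuous f" "\<And>x. x \<in> {a..b} \<Longrightarrow> \<bar>f x\<bar> \<le> B"
  shows "\<bar>integral\<^sup>L p f\<bar> \<le> B"
proof -
  have "integral\<^sup>L p (\<lambda>x. - B) \<le> integral\<^sup>L p f" "integral\<^sup>L p f \<le> integral\<^sup>L p (\<lambda>x. B)"
    using assms by (intro integral_mono_Delta[OF assms(1)] bounded_continuous_const; force simp: abs_le_iff)+
  then show ?thesis unfolding integral_const_Delta[OF assms(1)] by (simp add: abs_le_iff)
qed

lemma topspace_weak_top: "topspace (weak_top a b) = Delta a b"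
proof -
  have "Delta a b \<in> {{p \<in> Delta a b. integral\<^sup>L p h \<in> U} | (h :: real \<Rightarrow> real) U.
        continuous_on UNIV h \<and> bounded (range h) \<and> open U}"
    by (rule CollectI, rule exI[of _ "\<lambda>x. 0"], rule exI[of _ UNIV]) auto
  then show ?thesis unfolding weak_top_def topology_generated_by_topspace by auto
qed

lemma openin_weak_top_finite:
  assumes "finite I" "\<And>i. i \<in> I \<Longrightarrow> bounded_continuous (h i)" "\<And>i. i \<in> I \<Longrightarrow> open (V i)"
  shows "openin (weak_top a b) {q \<in> Delta a b. \<forall>i\<in>I. integral\<^sup>L q (h i) \<in> V i}"
proof -
  have "openin (weak_top a b) {p \<in> Delta a b. integral\<^sup>L p (h i) \<in> V i}" if "i \<in> I" for i
    unfolding weak_top_def using assms that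
    by (intro topology_generated_by_Basis) (auto simp: bounded_continuous_def)
  then have "openin (weak_top a b)
      ((\<Inter>i\<in>I. {p \<in> Delta a b. integral\<^sup>L p (h i) \<in> V i}) \<inter> topspace (weak_top a b))"
    using assms(1) by (intro openin_INT) auto
  moreover have "(\<Inter>i\<in>I. {p \<in> Delta a b. integral\<^sup>L p (h i) \<in> V i}) \<inter> topspace (weak_top a b)
      = {q \<in> Delta a b. \<forall>i\<in>I. integral\<^sup>L q (h i) \<in> V i}"
    by (auto simp: topspace_weak_top)
  ultimately show ?thesis by simp
qed

definition weak_ball ::
    "real \<Rightarrow> real \<Rightarrow> real measure \<Rightarrow> (real \<Rightarrow> real) set \<Rightarrow> real \<Rightarrow> real measure set" where
  "weak_ball a b p H e = {q \<in> Delta a b. \<forall>h\<in>H. \<bar>integral\<^sup>L q h - integral\<^sup>L p h\<bar> < e}"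

definition weak_ball_open :: "real \<Rightarrow> real \<Rightarrow> real measure set \<Rightarrow> bool" where
  "weak_ball_open a b U \<longleftrightarrow> (\<forall>p\<in>U. \<exists>H e. finite H \<and> (\<forall>h\<in>H. bounded_continuous h) \<and> e > 0 \<and>
     weak_ball a b p H e \<subseteq> U)"

lemma weak_ball_open_Int:
  assumes "weak_ball_open a b A" "weak_ball_open a b C"
  shows "weak_ball_open a b (A \<inter> C)"
  unfolding weak_ball_open_def
proof
  fix p assume "p \<in> A \<inter> C"
  then have p: "p \<in> A" "p \<in> C" by auto
  obtain H1 e1 where H1: "finite H1" "\<forall>h\<in>H1. bounded_continuous h" "e1 > 0"
      "weak_ball a b p H1 e1 \<subseteq> A"
    using bspec[OF assms(1)[unfolded weak_ball_open_def] p(1)] by blast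
  obtain H2 e2 where H2: "finite H2" "\<forall>h\<in>H2. bounded_continuous h" "e2 > 0"
      "weak_ball a b p H2 e2 \<subseteq> C"
    using bspec[OF assms(2)[unfolded weak_ball_open_def] p(2)] by blast
  have "weak_ball a b p (H1 \<union> H2) (min e1 e2) \<subseteq> weak_ball a b p H1 e1 \<inter> weak_ball a b p H2 e2"
    unfolding weak_ball_def by auto
  then have "weak_ball a b p (H1 \<union> H2) (min e1 e2) \<subseteq> A \<inter> C"
    using H1(4) H2(4) by blast
  moreover have "finite (H1 \<union> H2)" "\<forall>h\<in>H1 \<union> H2. bounded_continuous h" "min e1 e2 > 0"
    using H1 H2 by auto
  ultimately show "\<exists>H e. finite H \<and> (\<forall>h\<in>H. bounded_continuous h) \<and> e > 0 \<and>
      weak_ball a b p H e \<subseteq> A \<inter> C"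
    by blast
qed

lemma weak_ball_open_Union:
  assumes "\<And>k. k \<in> K \<Longrightarrow> weak_ball_open a b k"
  shows "weak_ball_open a b (\<Union>K)"
  unfolding weak_ball_open_def
proof
  fix p assume "p \<in> \<Union>K"
  then obtain k where k: "k \<in> K" "p \<in> k" by blast
  obtain H e where "finite H" "\<forall>h\<in>H. bounded_continuous h" "e > 0" "weak_ball a b p H e \<subseteq> k"
    using bspec[OF assms[OF k(1), unfolded weak_ball_open_def] k(2)] by blast
  with k(1) show "\<exists>H e. finite H \<and> (\<forall>h\<in>H. bounded_continuous h) \<and> e > 0 \<and>
      weak_ball a b p H e \<subseteq> \<Union>K"
    by blast
qed

lemma weak_ball_open_basic:
  assumes h: "bounded_continuous h" and "open V"
  shows "weak_ball_open a b {p \<in> Delta a b. integral\<^sup>L p h \<in> V}"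
  unfolding weak_ball_open_def
proof
  fix p assume p: "p \<in> {p \<in> Delta a b. integral\<^sup>L p h \<in> V}"
  then obtain e where e: "e > 0" "ball (integral\<^sup>L p h) e \<subseteq> V"
    using openE[OF \<open>open V\<close>] by blast
  have "weak_ball a b p {h} e \<subseteq> {p \<in> Delta a b. integral\<^sup>L p h \<in> V}"
  proof
    fix q assume "q \<in> weak_ball a b p {h} e"
    then have "q \<in> Delta a b" "integral\<^sup>L q h \<in> ball (integral\<^sup>L p h) e"
      by (auto simp: weak_ball_def dist_real_def abs_minus_commute)
    then show "q \<in> {p \<in> Delta a b. integral\<^sup>L p h \<in> V}" using e(2) by blast
  qed
  then show "\<exists>H e. finite H \<and> (\<forall>h\<in>H. bounded_continuous h) \<and> e > 0 \<and>
      weak_ball a b p H e \<subseteq> {p \<in> Delta a b. integral\<^sup>L p h \<in> V}"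
    using e(1) h by (intro exI[of _ "{h}"] exI[of _ e]) auto
qed

lemma weak_ball_subset_openin:
  assumes "openin (weak_top a b) U" "p \<in> U"
  obtains H e where "finite H" "\<And>h. h \<in> H \<Longrightarrow> bounded_continuous h" "e > 0"
    "weak_ball a b p H e \<subseteq> U"
proof -
  have "istopology (weak_ball_open a b)"
    unfolding istopology_def using weak_ball_open_Int weak_ball_open_Union by metis
  moreover have "weak_ball_open a b S"
    if "S \<in> {{p \<in> Delta a b. integral\<^sup>L p h \<in> U} | (h :: real \<Rightarrow> real) U.
        continuous_on UNIV h \<and> bounded (range h) \<and> open U}" for S
    using that weak_ball_open_basic unfolding bounded_continuous_def by blast
  moreover have "generate_topology_on {{p \<in> Delta a b. integral\<^sup>L p h \<in> U} | (h :: real \<Rightarrow> real) U.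
        continuous_on UNIV h \<and> bounded (range h) \<and> open U} U"
    using assms(1) unfolding weak_top_def by (rule openin_topology_generated_by)
  ultimately have "weak_ball_open a b U"
    by (rule generate_topology_on_coarsest)
  from bspec[OF this[unfolded weak_ball_open_def] assms(2)] obtain H e where
    "finite H" "\<forall>h\<in>H. bounded_continuous h" "e > 0" "weak_ball a b p H e \<subseteq> U"
    by blast
  then show ?thesis using that by blast
qed

section \<open>Grid measures and ramp approximations of survival functions\<close>

definition grid_point :: "real \<Rightarrow> real \<Rightarrow> nat \<Rightarrow> nat \<Rightarrow> real" where
  "grid_point a b N i = a + real i * (b - a) / real N"

lemma grid_point_0 [simp]: "grid_point a b N 0 = a"
  by (simp add: grid_point_def)

lemma grid_point_last: "N > 0 \<Longrightarrow> grid_point a b N N = b"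
  by (simp add: grid_point_def)

lemma grid_point_Suc: "N > 0 \<Longrightarrow> grid_point a b N (Suc i) = grid_point a b N i + (b - a) / N"
  by (simp add: grid_point_def field_simps)

lemma grid_point_mono: "a \<le> b \<Longrightarrow> i \<le> j \<Longrightarrow> grid_point a b N i \<le> grid_point a b N j"
  unfolding grid_point_def by (intro add_left_mono divide_right_mono mult_right_mono) auto

lemma grid_point_in_interval:
  assumes "a \<le> b" "i \<le> N"
  shows "grid_point a b N i \<in> {a..b}"
proof (cases "N = 0")
  case False
  then show ?thesis
    using assms grid_point_mono[of a b 0 i N] grid_point_mono[of a b i N N]
    by (simp add: grid_point_last)
qed (use assms in simp)

definition grid_weights :: "nat \<Rightarrow> (nat \<Rightarrow> real) \<Rightarrow> bool" where
  "grid_weights N w \<longleftrightarrow> (\<forall>i\<le>N. 0 \<le> w i) \<and> (\<Sum>i\<le>N. w i) = 1"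

definition grid_measure :: "real \<Rightarrow> real \<Rightarrow> nat \<Rightarrow> (nat \<Rightarrow> real) \<Rightarrow> real measure" where
  "grid_measure a b N w =
     distr (measure_pmf (pmf_of_list (map (\<lambda>i. (i, w i)) [0..<Suc N]))) borel (grid_point a b N)"

lemma pmf_of_list_grid_weights:
  assumes "grid_weights N w"
  shows "pmf_of_list_wf (map (\<lambda>i. (i, w i)) [0..<Suc N])"
    and "pmf (pmf_of_list (map (\<lambda>i. (i, w i)) [0..<Suc N])) j = (if j \<le> N then w j else 0)"
proof -
  have "sum_list (map w [0..<Suc N]) = (\<Sum>i\<le>N. w i)"
    by (simp only: sum_set_upt_conv_sum_list_nat[symmetric] set_upt atLeast0LessThan
        lessThan_Suc_atMost)
  then have "sum_list (map w [0..<Suc N]) = 1"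
    using assms by (simp add: grid_weights_def)
  then show wf: "pmf_of_list_wf (map (\<lambda>i. (i, w i)) [0..<Suc N])"
    using assms by (intro pmf_of_list_wfI) (auto simp: grid_weights_def o_def)
  have "filter (\<lambda>i. i = j) [0..<Suc N] = (if j \<le> N then [j] else [])"
    by (induction N) auto
  then show "pmf (pmf_of_list (map (\<lambda>i. (i, w i)) [0..<Suc N])) j = (if j \<le> N then w j else 0)"
    by (simp add: pmf_pmf_of_list[OF wf] filter_map o_def del: upt_Suc)
qed

lemma integral_grid_measure:
  assumes "grid_weights N w" "h \<in> borel_measurable borel"
  shows "integral\<^sup>L (grid_measure a b N w) h = (\<Sum>i\<le>N. w i * h (grid_point a b N i))"
proof -
  let ?P = "pmf_of_list (map (\<lambda>i. (i, w i)) [0..<Suc N])"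
  have "integral\<^sup>L (grid_measure a b N w) h = (\<integral>i. h (grid_point a b N i) \<partial>measure_pmf ?P)"
    unfolding grid_measure_def using assms(2) by (intro integral_distr) auto
  also have "\<dots> = (\<Sum>i\<le>N. h (grid_point a b N i) * pmf ?P i)"
    using pmf_of_list_grid_weights(2)[OF assms(1)]
    by (intro integral_measure_pmf_real) (auto simp: set_pmf_eq split: if_splits)
  also have "\<dots> = (\<Sum>i\<le>N. w i * h (grid_point a b N i))"
    using pmf_of_list_grid_weights(2)[OF assms(1)] by (auto intro!: sum.cong)
  finally show ?thesis .
qed

lemma grid_measure_in_Delta:
  assumes "grid_weights N w" "a \<le> b"
  shows "grid_measure a b N w \<in> Delta a b"
proof -
  let ?P = "pmf_of_list (map (\<lambda>i. (i, w i)) [0..<Suc N])"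
  have "set_pmf ?P \<subseteq> {..N}"
    using pmf_of_list_grid_weights(2)[OF assms(1)] by (auto simp: set_pmf_eq split: if_splits)
  then have "emeasure (measure_pmf ?P) (grid_point a b N -` {a..b}) = 1"
    using grid_point_in_interval[OF assms(2)]
    by (intro measure_pmf.emeasure_eq_1_AE) (auto simp: AE_measure_pmf_iff)
  then have "emeasure (grid_measure a b N w) {a..b} = 1"
    unfolding grid_measure_def by (subst emeasure_distr) auto
  moreover have "prob_space (grid_measure a b N w)"
    unfolding grid_measure_def by (intro prob_space.prob_space_distr measure_pmf.prob_space_axioms) auto
  ultimately show ?thesis by (simp add: Delta_def grid_measure_def)
qed

lemma grid_measure_cong:
  assumes "\<And>i. i \<le> N \<Longrightarrow> w i = w' i"
  shows "grid_measure a b N w = grid_measure a b N w'"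
proof -
  have "map (\<lambda>i. (i, w i)) [0..<Suc N] = map (\<lambda>i. (i, w' i)) [0..<Suc N]"
    using assms by (intro map_cong) auto
  then show ?thesis by (simp only: grid_measure_def)
qed

definition survival_sequence :: "nat \<Rightarrow> (nat \<Rightarrow> real) \<Rightarrow> bool" where
  "survival_sequence N T \<longleftrightarrow> T 0 = 1 \<and> T (Suc N) = 0 \<and> (\<forall>i\<le>N. T (Suc i) \<le> T i)"

lemma grid_weights_survival_sequence:
  "survival_sequence N T \<Longrightarrow> grid_weights N (\<lambda>i. T i - T (Suc i))"
  using sum_telescope[of T N] by (simp add: survival_sequence_def grid_weights_def)

definition ramp :: "real \<Rightarrow> real \<Rightarrow> real \<Rightarrow> real" where
  "ramp d c x = max 0 (min 1 ((x - c) / d))"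

lemma bounded_continuous_ramp: "bounded_continuous (ramp d c)"
proof -
  have "ramp d c = (\<lambda>x. max 0 (min 1 ((x - c) * inverse d)))"
    by (auto simp: ramp_def divide_inverse)
  then have "continuous_on UNIV (ramp d c)"
    by (simp add: continuous_intros)
  moreover have "range (ramp d c) \<subseteq> {0..1}"
    by (auto simp: ramp_def)
  then have "bounded (range (ramp d c))"
    by (rule bounded_subset[OF bounded_closed_interval])
  ultimately show ?thesis unfolding bounded_continuous_def ..
qed

lemma ramp_nonneg: "0 \<le> ramp d c x" and ramp_le_one: "ramp d c x \<le> 1"
  unfolding ramp_def by auto

lemma ramp_eq_0: "d > 0 \<Longrightarrow> x \<le> c \<Longrightarrow> ramp d c x = 0"
  unfolding ramp_def by (auto simp: divide_nonpos_pos)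

lemma ramp_eq_1: "d > 0 \<Longrightarrow> c + d \<le> x \<Longrightarrow> ramp d c x = 1"
  unfolding ramp_def by (auto simp: field_simps)

lemma ramp_antimono: "d > 0 \<Longrightarrow> c \<le> c' \<Longrightarrow> ramp d c' x \<le> ramp d c x"
  unfolding ramp_def by (intro max.mono min.mono order.refl divide_right_mono) auto

text \<open>A continuous substitute for the indicator of \<open>(grid_point a b N i - th, \<infinity>)\<close>, rising over
  half a grid step; its integrals play the role of survival probabilities at the grid points.\<close>

definition survival_ramp :: "real \<Rightarrow> real \<Rightarrow> nat \<Rightarrow> real \<Rightarrow> nat \<Rightarrow> real \<Rightarrow> real" where
  "survival_ramp a b N th i =
     (if i = 0 then (\<lambda>_. 1) else if N < i then (\<lambda>_. 0)
      else ramp ((b - a) / N / 2) (grid_point a b N i - th))"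

lemma bounded_continuous_survival_ramp: "bounded_continuous (survival_ramp a b N th i)"
  by (simp add: survival_ramp_def bounded_continuous_const bounded_continuous_ramp)

lemma survival_ramp_nonneg: "0 \<le> survival_ramp a b N th i x"
  and survival_ramp_le_one: "survival_ramp a b N th i x \<le> 1"
  by (simp_all add: survival_ramp_def ramp_nonneg ramp_le_one)

lemma survival_ramp_Suc_le:
  assumes "a < b" "N > 0"
  shows "survival_ramp a b N th (Suc i) x \<le> survival_ramp a b N th i x"
  using assms grid_point_mono[of a b i "Suc i" N]
  by (auto simp: survival_ramp_def ramp_nonneg ramp_le_one intro!: ramp_antimono)

lemma survival_ramp_step_locus:
  assumes "a < b" "N > 0" "x \<in> {a..b}" "i \<le> N" "0 \<le> th" "th \<le> 3/2 * ((b - a) / N)"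
    and step: "survival_ramp a b N th i x \<noteq> survival_ramp a b N th (Suc i) x"
  shows "grid_point a b N i - th \<le> x \<and> x \<le> grid_point a b N i + 3/2 * ((b - a) / N) - th"
proof
  define D where "D = (b - a) / N"
  have D: "D > 0" using assms(1,2) by (simp add: D_def)
  have next_point: "grid_point a b N (Suc i) = grid_point a b N i + D"
    using assms(2) by (simp add: grid_point_Suc D_def)
  show "grid_point a b N i - th \<le> x"
  proof (cases "i = 0")
    case False
    show ?thesis
    proof (rule ccontr)
      assume "\<not> ?thesis"
      then have "survival_ramp a b N th i x = 0" "survival_ramp a b N th (Suc i) x = 0"
        using False D next_point by (auto simp: survival_ramp_def D_def[symmetric] intro!: ramp_eq_0)
      with step show False by simp
    qed
  qed (use assms in simp)
  show "x \<le> grid_point a b N i + 3/2 * ((b - a) / N) - th"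
  proof (cases "i < N")
    case True
    show ?thesis
    proof (rule ccontr)
      assume "\<not> ?thesis"
      then have "survival_ramp a b N th i x = 1" "survival_ramp a b N th (Suc i) x = 1"
        using True D next_point by (auto simp: survival_ramp_def D_def[symmetric] intro!: ramp_eq_1)
      with step show False by simp
    qed
  next
    case False
    then show ?thesis using assms by (simp add: grid_point_last)
  qed
qed

lemma integral_survival_ramp:
  assumes "q \<in> Delta a b"
  shows "0 \<le> integral\<^sup>L q (survival_ramp a b N th i)" "integral\<^sup>L q (survival_ramp a b N th i) \<le> 1"
    and "a < b \<Longrightarrow> N > 0 \<Longrightarrow>
      integral\<^sup>L q (survival_ramp a b N th (Suc i)) \<le> integral\<^sup>L q (survival_ramp a b N th i)"
proof -
  have "integral\<^sup>L q (\<lambda>x. 0) \<le> integral\<^sup>L q (survival_ramp a b N th i)"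
    "integral\<^sup>L q (survival_ramp a b N th i) \<le> integral\<^sup>L q (\<lambda>x. 1)"
    by (intro integral_mono_Delta[OF assms] bounded_continuous_const bounded_continuous_survival_ramp
        survival_ramp_nonneg survival_ramp_le_one)+
  then show "0 \<le> integral\<^sup>L q (survival_ramp a b N th i)" "integral\<^sup>L q (survival_ramp a b N th i) \<le> 1"
    unfolding integral_const_Delta[OF assms] .
  show "a < b \<Longrightarrow> N > 0 \<Longrightarrow>
      integral\<^sup>L q (survival_ramp a b N th (Suc i)) \<le> integral\<^sup>L q (survival_ramp a b N th i)"
    by (intro integral_mono_Delta[OF assms] bounded_continuous_survival_ramp survival_ramp_Suc_le)
qed

lemma integral_survival_ramp_0: "q \<in> Delta a b \<Longrightarrow> integral\<^sup>L q (survival_ramp a b N th 0) = 1"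
  and integral_survival_ramp_last: "q \<in> Delta a b \<Longrightarrow> integral\<^sup>L q (survival_ramp a b N th (Suc N)) = 0"
  using integral_const_Delta[of q a b 1] by (simp_all add: survival_ramp_def)

lemma survival_ramp_differences:
  assumes "a < b" "N > 0"
  shows "(\<Sum>i\<le>N. survival_ramp a b N th i x - survival_ramp a b N th (Suc i) x) = 1"
    and "0 \<le> survival_ramp a b N th i x - survival_ramp a b N th (Suc i) x"
  using sum_telescope[of "\<lambda>i. survival_ramp a b N th i x" N] survival_ramp_Suc_le[OF assms]
  by (simp_all add: survival_ramp_def)

lemma convex_combination_le:
  fixes w c :: "nat \<Rightarrow> real"
  assumes "(\<Sum>i\<le>N. w i) = 1" "\<And>i. i \<le> N \<Longrightarrow> 0 \<le> w i" "\<And>i. i \<le> N \<Longrightarrow> w i \<noteq> 0 \<Longrightarrow> c i \<le> y"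
  shows "(\<Sum>i\<le>N. w i * c i) \<le> y"
proof -
  have "(\<Sum>i\<le>N. w i * c i) \<le> (\<Sum>i\<le>N. w i * y)"
  proof (rule sum_mono)
    fix i assume "i \<in> {..N}"
    then show "w i * c i \<le> w i * y" using assms(2,3) by (cases "w i = 0") (auto intro: mult_left_mono)
  qed
  also have "\<dots> = y" using assms(1) by (simp flip: sum_distrib_right)
  finally show ?thesis .
qed

lemma convex_combination_ge:
  fixes w c :: "nat \<Rightarrow> real"
  assumes "(\<Sum>i\<le>N. w i) = 1" "\<And>i. i \<le> N \<Longrightarrow> 0 \<le> w i" "\<And>i. i \<le> N \<Longrightarrow> w i \<noteq> 0 \<Longrightarrow> y \<le> c i"
  shows "y \<le> (\<Sum>i\<le>N. w i * c i)"
  using convex_combination_le[where c="\<lambda>i. - c i" and y="- y"] assms by (simp add: sum_negf)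

lemma sum_diff_mult_by_parts:
  "(\<Sum>i\<le>N. (u i - u (Suc i)) * (c i :: real)) =
     u 0 * c 0 - u (Suc N) * c N + (\<Sum>i<N. u (Suc i) * (c (Suc i) - c i))"
  by (induction N) (auto simp: algebra_simps)

lemma sum_diff_mult_mono:
  fixes u v c :: "nat \<Rightarrow> real"
  assumes "u 0 = v 0" "u (Suc N) = v (Suc N)" "\<And>i. i < N \<Longrightarrow> u (Suc i) \<le> v (Suc i)"
    "\<And>i. i < N \<Longrightarrow> c i \<le> c (Suc i)"
  shows "(\<Sum>i\<le>N. (u i - u (Suc i)) * c i) \<le> (\<Sum>i\<le>N. (v i - v (Suc i)) * c i)"
  unfolding sum_diff_mult_by_parts using assms by (auto intro!: sum_mono mult_right_mono)

definition ramp_interpolant :: "(nat \<Rightarrow> real \<Rightarrow> real) \<Rightarrow> nat \<Rightarrow> (nat \<Rightarrow> real) \<Rightarrow> real \<Rightarrow> real" where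
  "ramp_interpolant f N c x = (\<Sum>i\<le>N. (f i x - f (Suc i) x) * c i)"

lemma bounded_continuous_ramp_interpolant:
  "(\<And>i. bounded_continuous (f i)) \<Longrightarrow> bounded_continuous (ramp_interpolant f N c)"
  unfolding ramp_interpolant_def
  by (intro bounded_continuous_sum bounded_continuous_mult_const bounded_continuous_diff) auto

lemma integral_ramp_interpolant:
  assumes "q \<in> Delta a b" "\<And>i. bounded_continuous (f i)"
  shows "integral\<^sup>L q (ramp_interpolant f N c) =
    (\<Sum>i\<le>N. (integral\<^sup>L q (f i) - integral\<^sup>L q (f (Suc i))) * c i)"
proof -
  have f: "integrable q (f i)" for i using assms by (rule integrable_Delta)
  have "integral\<^sup>L q (ramp_interpolant f N c) = (\<Sum>i\<le>N. integral\<^sup>L q (\<lambda>x. (f i x - f (Suc i) x) * c i))"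
    unfolding ramp_interpolant_def
    by (rule Bochner_Integration.integral_sum[of _ _ "\<lambda>i x. (f i x - f (Suc i) x) * c i"])
      (auto intro: f)
  also have "\<dots> = (\<Sum>i\<le>N. (integral\<^sup>L q (f i) - integral\<^sup>L q (f (Suc i))) * c i)"
    using f by simp
  finally show ?thesis .
qed

section \<open>Rational grid measures bracketing a distribution\<close>

lemma abs_ramp_interpolant_diff_le:
  assumes "a < b" "N > 0" "0 \<le> th" "th \<le> 3/2 * ((b - a) / N)" and x: "x \<in> {a..b}"
    and modulus: "\<And>x y. x \<in> {a..b} \<Longrightarrow> y \<in> {a..b} \<Longrightarrow> \<bar>x - y\<bar> \<le> 2 * (b - a) / N \<Longrightarrow>
      \<bar>h x - h y\<bar> \<le> \<omega>"
  shows "\<bar>ramp_interpolant (survival_ramp a b N th) N (\<lambda>i. h (grid_point a b N i)) x - h x\<bar> \<le> \<omega>"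
proof -
  define f where "f = survival_ramp a b N th"
  have near: "\<bar>h (grid_point a b N i) - h x\<bar> \<le> \<omega>" if "i \<le> N" "f i x - f (Suc i) x \<noteq> 0" for i
  proof -
    have "grid_point a b N i - th \<le> x \<and> x \<le> grid_point a b N i + 3/2 * ((b - a) / N) - th"
      using survival_ramp_step_locus[OF assms(1,2) x that(1) assms(3,4)] that(2) by (simp add: f_def)
    moreover have "2 * (b - a) / N = 2 * ((b - a) / N)" by simp
    ultimately have "\<bar>grid_point a b N i - x\<bar> \<le> 2 * (b - a) / N"
      using assms(3,4) by linarith
    moreover have "grid_point a b N i \<in> {a..b}"
      using assms(1) that(1) by (intro grid_point_in_interval) auto
    ultimately show ?thesis using modulus x by blast
  qed
  have weights: "(\<Sum>i\<le>N. f i x - f (Suc i) x) = 1" "\<And>i. 0 \<le> f i x - f (Suc i) x"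
    unfolding f_def using survival_ramp_differences[OF assms(1,2)] by auto
  have "ramp_interpolant f N (\<lambda>i. h (grid_point a b N i)) x \<le> h x + \<omega>"
    unfolding ramp_interpolant_def
    by (rule convex_combination_le[OF weights]) (use near in \<open>force simp: abs_le_iff\<close>)
  moreover have "h x - \<omega> \<le> ramp_interpolant f N (\<lambda>i. h (grid_point a b N i)) x"
    unfolding ramp_interpolant_def
    by (rule convex_combination_ge[OF weights]) (use near in \<open>force simp: abs_le_iff\<close>)
  ultimately show ?thesis by (simp add: abs_le_iff f_def)
qed

lemma abs_sum_diff_mult_diff_le:
  fixes T S c :: "nat \<Rightarrow> real"
  assumes err: "\<And>i. i \<le> Suc N \<Longrightarrow> \<bar>T i - S i\<bar> \<le> \<eta>" and c: "\<And>i. \<bar>c i\<bar> \<le> B"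
  shows "\<bar>(\<Sum>i\<le>N. (T i - T (Suc i)) * c i) - (\<Sum>i\<le>N. (S i - S (Suc i)) * c i)\<bar>
    \<le> 2 * real (Suc N) * \<eta> * B"
proof -
  have "0 \<le> \<eta>" using err[of 0] by linarith
  have "\<bar>(\<Sum>i\<le>N. (T i - T (Suc i)) * c i) - (\<Sum>i\<le>N. (S i - S (Suc i)) * c i)\<bar>
      \<le> (\<Sum>i\<le>N. \<bar>((T i - S i) - (T (Suc i) - S (Suc i))) * c i\<bar>)"
    by (simp add: sum_subtractf[symmetric] algebra_simps sum_abs del: sum.atMost_Suc)
  also have "\<dots> \<le> (\<Sum>i\<le>N. 2 * \<eta> * B)"
  proof (rule sum_mono)
    fix i assume "i \<in> {..N}"
    then have "\<bar>(T i - S i) - (T (Suc i) - S (Suc i))\<bar> \<le> 2 * \<eta>"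
      using err[of i] err[of "Suc i"] by simp
    then show "\<bar>((T i - S i) - (T (Suc i) - S (Suc i))) * c i\<bar> \<le> 2 * \<eta> * B"
      unfolding abs_mult using c \<open>0 \<le> \<eta>\<close> by (intro mult_mono) auto
  qed
  finally show ?thesis by (simp add: algebra_simps)
qed

lemma integral_grid_measure_approx:
  assumes "a < b" "N > 0" "0 \<le> th" "th \<le> 3/2 * ((b - a) / N)" "p \<in> Delta a b"
    and T: "survival_sequence N T"
    and close: "\<And>i. i \<in> {1..N} \<Longrightarrow> \<bar>T i - integral\<^sup>L p (survival_ramp a b N th i)\<bar> \<le> \<eta>"
    and h: "bounded_continuous h" "\<And>x. \<bar>h x\<bar> \<le> B"
    and modulus: "\<And>x y. x \<in> {a..b} \<Longrightarrow> y \<in> {a..b} \<Longrightarrow> \<bar>x - y\<bar> \<le> 2 * (b - a) / N \<Longrightarrow>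
      \<bar>h x - h y\<bar> \<le> \<omega>"
  shows "\<bar>integral\<^sup>L (grid_measure a b N (\<lambda>i. T i - T (Suc i))) h - integral\<^sup>L p h\<bar>
    \<le> \<omega> + 2 * real (Suc N) * \<eta> * B"
proof -
  define f where "f = survival_ramp a b N th"
  define S where "S i = integral\<^sup>L p (f i)" for i
  define c where "c i = h (grid_point a b N i)" for i
  have f: "bounded_continuous (f i)" for i
    unfolding f_def by (rule bounded_continuous_survival_ramp)
  have "0 \<le> \<eta>"
    using close[of 1] assms(2) by force
  then have "\<bar>T i - S i\<bar> \<le> \<eta>" if "i \<le> Suc N" for i
    using that close[of i] T integral_survival_ramp_0[OF assms(5)] integral_survival_ramp_last[OF assms(5)]
    by (cases "i = 0 \<or> i = Suc N") (auto simp: S_def f_def survival_sequence_def)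
  then have survival_error: "\<bar>(\<Sum>i\<le>N. (T i - T (Suc i)) * c i) - (\<Sum>i\<le>N. (S i - S (Suc i)) * c i)\<bar>
      \<le> 2 * real (Suc N) * \<eta> * B"
    using h(2) by (intro abs_sum_diff_mult_diff_le) (auto simp: c_def)
  have "\<bar>ramp_interpolant f N c x - h x\<bar> \<le> \<omega>" if "x \<in> {a..b}" for x
    unfolding f_def c_def by (rule abs_ramp_interpolant_diff_le[OF assms(1-4) that modulus])
  then have "\<bar>integral\<^sup>L p (\<lambda>x. ramp_interpolant f N c x - h x)\<bar> \<le> \<omega>"
    by (intro abs_integral_le_Delta[OF assms(5)] bounded_continuous_diff
        bounded_continuous_ramp_interpolant f h(1))
  then have interpolation_error: "\<bar>integral\<^sup>L p (ramp_interpolant f N c) - integral\<^sup>L p h\<bar> \<le> \<omega>"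
    using integrable_Delta[OF assms(5)] bounded_continuous_ramp_interpolant[OF f] h(1) by simp
  have "integral\<^sup>L (grid_measure a b N (\<lambda>i. T i - T (Suc i))) h = (\<Sum>i\<le>N. (T i - T (Suc i)) * c i)"
    using h(1) by (simp add: integral_grid_measure[OF grid_weights_survival_sequence[OF T]] c_def
        bounded_continuous_def borel_measurable_continuous_onI)
  moreover have "integral\<^sup>L p (ramp_interpolant f N c) = (\<Sum>i\<le>N. (S i - S (Suc i)) * c i)"
    unfolding S_def by (rule integral_ramp_interpolant[OF assms(5) f])
  ultimately show ?thesis using survival_error interpolation_error by linarith
qed

lemma eventually_grid_modulus:
  fixes h :: "real \<Rightarrow> real"
  assumes "continuous_on {a..b} h" "e > 0"
  shows "\<forall>\<^sub>F N in sequentially. \<forall>x\<in>{a..b}. \<forall>y\<in>{a..b}. \<bar>x - y\<bar> \<le> C / real N \<longrightarrow> \<bar>h x - h y\<bar> \<le> e"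
proof -
  have "uniformly_continuous_on {a..b} h"
    using assms(1) by (rule compact_uniformly_continuous) simp
  then obtain r where r: "r > 0"
    and uc: "\<And>x y. x \<in> {a..b} \<Longrightarrow> y \<in> {a..b} \<Longrightarrow> dist y x < r \<Longrightarrow> dist (h y) (h x) < e"
    using assms(2) unfolding uniformly_continuous_on_def by blast
  have "\<forall>\<^sub>F N in sequentially. C / real N < r"
    using lim_const_over_n[of C] r by (rule order_tendstoD(2))
  then show ?thesis
  proof eventually_elim
    case (elim N)
    show ?case
    proof (intro ballI impI)
      fix x y assume "x \<in> {a..b}" "y \<in> {a..b}" "\<bar>x - y\<bar> \<le> C / real N"
      then have "dist (h x) (h y) < e" using elim uc[of y x] by (simp add: dist_real_def)
      then show "\<bar>h x - h y\<bar> \<le> e" by (simp add: dist_real_def)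
    qed
  qed
qed

lemma grid_measures_in_weak_ball:
  assumes "a < b" "p \<in> Delta a b" "finite H" "\<And>h. h \<in> H \<Longrightarrow> bounded_continuous h" "e > 0"
  obtains N M :: nat where "N > 0" "M > 0"
    "\<And>th T. 0 \<le> th \<Longrightarrow> th \<le> 3/2 * ((b - a) / N) \<Longrightarrow> survival_sequence N T \<Longrightarrow>
       (\<And>i. i \<in> {1..N} \<Longrightarrow> \<bar>T i - integral\<^sup>L p (survival_ramp a b N th i)\<bar> \<le> 2 / M) \<Longrightarrow>
       grid_measure a b N (\<lambda>i. T i - T (Suc i)) \<in> weak_ball a b p H e"
proof -
  have "\<forall>\<^sub>F N in sequentially. N > 0 \<and> (\<forall>h\<in>H. \<forall>x\<in>{a..b}. \<forall>y\<in>{a..b}.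
      \<bar>x - y\<bar> \<le> 2 * (b - a) / real N \<longrightarrow> \<bar>h x - h y\<bar> \<le> e / 2)"
    using assms(3-5)
    by (intro eventually_conj eventually_gt_at_top eventually_ball_finite ballI eventually_grid_modulus)
      (auto simp: bounded_continuous_def intro: continuous_on_subset)
  then obtain N where N: "N > 0" and modulus: "\<forall>h\<in>H. \<forall>x\<in>{a..b}. \<forall>y\<in>{a..b}.
      \<bar>x - y\<bar> \<le> 2 * (b - a) / real N \<longrightarrow> \<bar>h x - h y\<bar> \<le> e / 2"
    unfolding eventually_sequentially by blast
  have "\<forall>h\<in>H. \<exists>B. \<forall>x. \<bar>h x\<bar> \<le> B"
    using assms(4) bounded_continuous_bound by metis
  then obtain B where B: "\<forall>h\<in>H. \<forall>x. \<bar>h x\<bar> \<le> B h"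
    by metis
  have "\<forall>\<^sub>F M in sequentially. M > 0 \<and> (\<forall>h\<in>H. 4 * real (Suc N) * B h / real M < e / 2)"
    using assms(3,5)
    by (intro eventually_conj eventually_gt_at_top eventually_ball_finite ballI
        order_tendstoD(2)[OF lim_const_over_n]) auto
  then obtain M where M: "M > 0" "\<forall>h\<in>H. 4 * real (Suc N) * B h / real M < e / 2"
    unfolding eventually_sequentially by blast
  show thesis
  proof (rule that[OF N M(1)])
    fix th T
    assume th: "0 \<le> th" "th \<le> 3/2 * ((b - a) / N)" and T: "survival_sequence N T"
      and close: "\<And>i. i \<in> {1..N} \<Longrightarrow> \<bar>T i - integral\<^sup>L p (survival_ramp a b N th i)\<bar> \<le> 2 / M"
    have "\<bar>integral\<^sup>L (grid_measure a b N (\<lambda>i. T i - T (Suc i))) h - integral\<^sup>L p h\<bar> < e"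
      if h: "h \<in> H" for h
    proof -
      have "\<bar>integral\<^sup>L (grid_measure a b N (\<lambda>i. T i - T (Suc i))) h - integral\<^sup>L p h\<bar>
          \<le> e / 2 + 2 * real (Suc N) * (2 / M) * B h"
        using h modulus B
        by (intro integral_grid_measure_approx[OF assms(1) N th assms(2) T close assms(4)]) auto
      moreover have "2 * real (Suc N) * (2 / M) * B h = 4 * real (Suc N) * B h / M"
        by simp
      ultimately show ?thesis using M(2) h by fastforce
    qed
    moreover have "grid_measure a b N (\<lambda>i. T i - T (Suc i)) \<in> Delta a b"
      using assms(1) by (intro grid_measure_in_Delta grid_weights_survival_sequence T) simp
    ultimately show "grid_measure a b N (\<lambda>i. T i - T (Suc i)) \<in> weak_ball a b p H e"
      by (simp add: weak_ball_def)
  qed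
qed

text \<open>With the shift of \<open>3/2\<close> grid steps every ramp step lies left of its grid point
  (\<open>survival_ramp_step_locus\<close>), so passing to the grid measure moves mass only upwards; with
  shift \<open>0\<close> it moves mass only downwards.\<close>

lemma fosd_grid_measure_above:
  assumes "a < b" "N > 0" "q \<in> Delta a b" "survival_sequence N T"
    and le: "\<And>i. i \<in> {1..N} \<Longrightarrow> integral\<^sup>L q (survival_ramp a b N (3/2 * ((b - a) / N)) i) \<le> T i"
  shows "fosd (grid_measure a b N (\<lambda>i. T i - T (Suc i))) q"
  unfolding fosd_def
proof (intro allI impI, elim conjE)
  fix g :: "real \<Rightarrow> real"
  assume "continuous_on UNIV g" "bounded (range g)" and g: "mono g"
  then have g_bc: "bounded_continuous g" by (simp add: bounded_continuous_def)
  define f where "f = survival_ramp a b N (3/2 * ((b - a) / N))"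
  define c where "c i = g (grid_point a b N i)" for i
  have f: "bounded_continuous (f i)" for i
    unfolding f_def by (rule bounded_continuous_survival_ramp)
  have "integral\<^sup>L q g \<le> integral\<^sup>L q (ramp_interpolant f N c)"
  proof (rule integral_mono_Delta[OF assms(3) g_bc bounded_continuous_ramp_interpolant[OF f]])
    fix x assume x: "x \<in> {a..b}"
    have weights: "(\<Sum>i\<le>N. f i x - f (Suc i) x) = 1" "\<And>i. 0 \<le> f i x - f (Suc i) x"
      unfolding f_def using survival_ramp_differences[OF assms(1,2)] by auto
    show "g x \<le> ramp_interpolant f N c x"
      unfolding ramp_interpolant_def
    proof (rule convex_combination_ge[OF weights])
      fix i assume "i \<le> N" "f i x - f (Suc i) x \<noteq> 0"
      then have "x \<le> grid_point a b N i"
        using survival_ramp_step_locus[OF assms(1,2) x, of i "3/2 * ((b - a) / N)"] assms(1)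
        by (simp add: f_def)
      then show "g x \<le> c i" unfolding c_def by (rule monoD[OF g])
    qed
  qed
  also have "\<dots> = (\<Sum>i\<le>N. (integral\<^sup>L q (f i) - integral\<^sup>L q (f (Suc i))) * c i)"
    by (rule integral_ramp_interpolant[OF assms(3) f])
  also have "\<dots> \<le> (\<Sum>i\<le>N. (T i - T (Suc i)) * c i)"
  proof (rule sum_diff_mult_mono)
    show "integral\<^sup>L q (f 0) = T 0" "integral\<^sup>L q (f (Suc N)) = T (Suc N)"
      using assms(4) integral_survival_ramp_0[OF assms(3)] integral_survival_ramp_last[OF assms(3)]
      by (simp_all add: f_def survival_sequence_def)
    fix i assume "i < N"
    then show "integral\<^sup>L q (f (Suc i)) \<le> T (Suc i)" using le[of "Suc i"] by (simp add: f_def)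
    show "c i \<le> c (Suc i)"
      unfolding c_def using assms(1) by (intro monoD[OF g] grid_point_mono) auto
  qed
  also have "\<dots> = integral\<^sup>L (grid_measure a b N (\<lambda>i. T i - T (Suc i))) g"
    using g_bc by (simp add: integral_grid_measure[OF grid_weights_survival_sequence[OF assms(4)]]
        c_def mult.commute bounded_continuous_def borel_measurable_continuous_onI)
  finally show "integral\<^sup>L q g \<le> integral\<^sup>L (grid_measure a b N (\<lambda>i. T i - T (Suc i))) g" .
qed

lemma fosd_grid_measure_below:
  assumes "a < b" "N > 0" "q \<in> Delta a b" "survival_sequence N T"
    and ge: "\<And>i. i \<in> {1..N} \<Longrightarrow> T i \<le> integral\<^sup>L q (survival_ramp a b N 0 i)"
  shows "fosd q (grid_measure a b N (\<lambda>i. T i - T (Suc i)))"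
  unfolding fosd_def
proof (intro allI impI, elim conjE)
  fix g :: "real \<Rightarrow> real"
  assume "continuous_on UNIV g" "bounded (range g)" and g: "mono g"
  then have g_bc: "bounded_continuous g" by (simp add: bounded_continuous_def)
  define f where "f = survival_ramp a b N 0"
  define c where "c i = g (grid_point a b N i)" for i
  have f: "bounded_continuous (f i)" for i
    unfolding f_def by (rule bounded_continuous_survival_ramp)
  have "integral\<^sup>L (grid_measure a b N (\<lambda>i. T i - T (Suc i))) g = (\<Sum>i\<le>N. (T i - T (Suc i)) * c i)"
    using g_bc by (simp add: integral_grid_measure[OF grid_weights_survival_sequence[OF assms(4)]]
        c_def mult.commute bounded_continuous_def borel_measurable_continuous_onI)
  also have "\<dots> \<le> (\<Sum>i\<le>N. (integral\<^sup>L q (f i) - integral\<^sup>L q (f (Suc i))) * c i)"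
  proof (rule sum_diff_mult_mono)
    show "T 0 = integral\<^sup>L q (f 0)" "T (Suc N) = integral\<^sup>L q (f (Suc N))"
      using assms(4) integral_survival_ramp_0[OF assms(3)] integral_survival_ramp_last[OF assms(3)]
      by (simp_all add: f_def survival_sequence_def)
    fix i assume "i < N"
    then show "T (Suc i) \<le> integral\<^sup>L q (f (Suc i))" using ge[of "Suc i"] by (simp add: f_def)
    show "c i \<le> c (Suc i)"
      unfolding c_def using assms(1) by (intro monoD[OF g] grid_point_mono) auto
  qed
  also have "\<dots> = integral\<^sup>L q (ramp_interpolant f N c)"
    by (rule integral_ramp_interpolant[OF assms(3) f, symmetric])
  also have "\<dots> \<le> integral\<^sup>L q g"
  proof (rule integral_mono_Delta[OF assms(3) bounded_continuous_ramp_interpolant[OF f] g_bc])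
    fix x assume x: "x \<in> {a..b}"
    have weights: "(\<Sum>i\<le>N. f i x - f (Suc i) x) = 1" "\<And>i. 0 \<le> f i x - f (Suc i) x"
      unfolding f_def using survival_ramp_differences[OF assms(1,2)] by auto
    show "ramp_interpolant f N c x \<le> g x"
      unfolding ramp_interpolant_def
    proof (rule convex_combination_le[OF weights])
      fix i assume "i \<le> N" "f i x - f (Suc i) x \<noteq> 0"
      then have "grid_point a b N i \<le> x"
        using survival_ramp_step_locus[OF assms(1,2) x, of i 0] assms(1,2)
        by (simp add: f_def)
      then show "c i \<le> g x" unfolding c_def by (rule monoD[OF g])
    qed
  qed
  finally show "integral\<^sup>L (grid_measure a b N (\<lambda>i. T i - T (Suc i))) g \<le> integral\<^sup>L q g" .
qed

definition round_above :: "nat \<Rightarrow> real \<Rightarrow> real" where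
  "round_above M s = min 1 ((of_int \<lceil>real M * s\<rceil> + 1) / real M)"

definition round_below :: "nat \<Rightarrow> real \<Rightarrow> real" where
  "round_below M s = max 0 ((of_int \<lfloor>real M * s\<rfloor> - 1) / real M)"

lemma round_above_Rats: "round_above M s \<in> \<rat>"
  by (auto simp: round_above_def min_def)

lemma round_below_Rats: "round_below M s \<in> \<rat>"
  by (auto simp: round_below_def max_def)

lemma round_above_mono:
  assumes "s \<le> s'"
  shows "round_above M s \<le> round_above M s'"
proof -
  have "\<lceil>real M * s\<rceil> \<le> \<lceil>real M * s'\<rceil>"
    using assms by (intro ceiling_mono mult_left_mono) auto
  then show ?thesis
    unfolding round_above_def by (intro min.mono order.refl divide_right_mono) auto
qed

lemma round_below_mono:
  assumes "s \<le> s'"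
  shows "round_below M s \<le> round_below M s'"
proof -
  have "\<lfloor>real M * s\<rfloor> \<le> \<lfloor>real M * s'\<rfloor>"
    using assms by (intro floor_mono mult_left_mono) auto
  then show ?thesis
    unfolding round_below_def by (intro max.mono order.refl divide_right_mono) auto
qed

lemma round_above_bounds:
  assumes "M > 0"
  shows "round_above M s \<le> 1" and "0 \<le> s \<Longrightarrow> 0 \<le> round_above M s"
    and "s \<le> 1 \<Longrightarrow> \<bar>round_above M s - s\<bar> \<le> 2 / M"
    and "t \<le> 1 \<Longrightarrow> t < s + 1 / M \<Longrightarrow> t \<le> round_above M s"
proof -
  have M: "real M > 0" using assms by simp
  define u where "u = (of_int \<lceil>real M * s\<rceil> + 1) / real M"
  have "(s + 1 / M) * M = M * s + 1" "(s + 2 / M) * M = M * s + 2"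
    using M by (simp_all add: field_simps)
  then have "s + 1 / M \<le> u" "u \<le> s + 2 / M"
    unfolding u_def pos_le_divide_eq[OF M] pos_divide_le_eq[OF M]
    using le_of_int_ceiling[of "real M * s"] of_int_ceiling_le_add_one[of "real M * s"] by linarith+
  moreover have "0 < 1 / real M" "2 / real M = 2 * (1 / real M)" using M by simp_all
  ultimately show "round_above M s \<le> 1" "0 \<le> s \<Longrightarrow> 0 \<le> round_above M s"
    "s \<le> 1 \<Longrightarrow> \<bar>round_above M s - s\<bar> \<le> 2 / M"
    "t \<le> 1 \<Longrightarrow> t < s + 1 / M \<Longrightarrow> t \<le> round_above M s"
    using min_def[of 1 u] unfolding round_above_def u_def[symmetric] abs_le_iff
    by (smt (verit))+
qed

lemma round_below_bounds:
  assumes "M > 0"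
  shows "0 \<le> round_below M s" and "s \<le> 1 \<Longrightarrow> round_below M s \<le> 1"
    and "0 \<le> s \<Longrightarrow> \<bar>round_below M s - s\<bar> \<le> 2 / M"
    and "0 \<le> t \<Longrightarrow> s - 1 / M < t \<Longrightarrow> round_below M s \<le> t"
proof -
  have M: "real M > 0" using assms by simp
  define u where "u = (of_int \<lfloor>real M * s\<rfloor> - 1) / real M"
  have "(s - 1 / M) * M = M * s - 1" "(s - 2 / M) * M = M * s - 2"
    using M by (simp_all add: field_simps)
  then have "u \<le> s - 1 / M" "s - 2 / M \<le> u"
    unfolding u_def pos_le_divide_eq[OF M] pos_divide_le_eq[OF M]
    using of_int_floor_le[of "real M * s"] real_of_int_floor_gt_diff_one[of "real M * s"] by linarith+
  moreover have "0 < 1 / real M" "2 / real M = 2 * (1 / real M)" using M by simp_all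
  ultimately show "0 \<le> round_below M s" "s \<le> 1 \<Longrightarrow> round_below M s \<le> 1"
    "0 \<le> s \<Longrightarrow> \<bar>round_below M s - s\<bar> \<le> 2 / M"
    "0 \<le> t \<Longrightarrow> s - 1 / M < t \<Longrightarrow> round_below M s \<le> t"
    using max_def[of 0 u] unfolding round_below_def u_def[symmetric] abs_le_iff
    by (smt (verit))+
qed

definition truncated :: "nat \<Rightarrow> (nat \<Rightarrow> real) \<Rightarrow> nat \<Rightarrow> real" where
  "truncated N r i = (if i = 0 then 1 else if N < i then 0 else r i)"

lemma survival_sequence_truncated:
  assumes "\<And>i. 0 \<le> r i" "\<And>i. r i \<le> 1" "\<And>i. r (Suc i) \<le> r i"
  shows "survival_sequence N (truncated N r)"
  using assms by (auto simp: survival_sequence_def truncated_def)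

text \<open>Lists that are not probability vectors denote the point mass at \<open>a\<close>, so that every list
  codes an element of \<open>Delta a b\<close>.\<close>

definition rat_grid_measure :: "real \<Rightarrow> real \<Rightarrow> rat list \<Rightarrow> real measure" where
  "rat_grid_measure a b ws =
     (if (\<forall>r\<in>set ws. 0 \<le> r) \<and> sum_list ws = 1
      then grid_measure a b (length ws - 1) (\<lambda>i. of_rat (ws ! i)) else return borel a)"

lemma rat_grid_measure_in_Delta:
  assumes "a \<le> b"
  shows "rat_grid_measure a b ws \<in> Delta a b"
proof (cases "(\<forall>r\<in>set ws. 0 \<le> r) \<and> sum_list ws = 1")
  case True
  then have "ws \<noteq> []" by auto
  then have "(\<Sum>i\<le>length ws - 1. (of_rat (ws ! i) :: real)) = of_rat (sum_list ws)"
    by (simp add: of_rat_sum sum_list_sum_nth atLeast0LessThan lessThan_Suc_atMost[symmetric])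
  moreover have "0 \<le> ws ! i" if "i \<le> length ws - 1" for i
  proof -
    have "i < length ws" using that \<open>ws \<noteq> []\<close> by (cases ws) auto
    then show ?thesis using True nth_mem by blast
  qed
  ultimately have "grid_weights (length ws - 1) (\<lambda>i. of_rat (ws ! i))"
    using True by (simp add: grid_weights_def)
  with True assms show ?thesis
    by (simp add: rat_grid_measure_def grid_measure_in_Delta)
next
  case False
  with assms show ?thesis
    unfolding rat_grid_measure_def if_not_P[OF False] by (simp add: Delta_def prob_space_return)
qed

lemma rat_grid_measure_of_survival_sequence:
  assumes "survival_sequence N T" "\<And>i. T i \<in> \<rat>"
  obtains ws where "rat_grid_measure a b ws = grid_measure a b N (\<lambda>i. T i - T (Suc i))"
proof -
  define r where "r i = (SOME q. T i = of_rat q)" for i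
  have r: "T i = of_rat (r i)" for i
  proof -
    obtain q where "T i = of_rat q" using assms(2)[of i] by (rule Rats_cases)
    then show ?thesis unfolding r_def by (rule someI[where P = "\<lambda>q. T i = of_rat q"])
  qed
  define ws where "ws = map (\<lambda>i. r i - r (Suc i)) [0..<Suc N]"
  have nth: "ws ! i = r i - r (Suc i)" if "i \<le> N" for i
    using that by (simp add: ws_def nth_map_upt del: upt_Suc)
  have "r (Suc i) \<le> r i" if "i \<le> N" for i
  proof -
    have "T (Suc i) \<le> T i" using assms(1) that by (simp add: survival_sequence_def)
    then show ?thesis unfolding r by (simp add: of_rat_less_eq)
  qed
  then have "\<forall>x\<in>set ws. 0 \<le> x"
    by (simp add: ws_def del: upt_Suc)
  moreover have "sum_list ws = 1"
  proof -
    have "sum_list ws = (\<Sum>i\<le>N. r i - r (Suc i))"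
      by (simp only: ws_def sum_set_upt_conv_sum_list_nat[symmetric] set_upt atLeast0LessThan
          lessThan_Suc_atMost)
    also have "\<dots> = 1"
      using assms(1) r[of 0] r[of "Suc N"] by (simp add: sum_telescope survival_sequence_def)
    finally show ?thesis .
  qed
  ultimately have "rat_grid_measure a b ws = grid_measure a b N (\<lambda>i. of_rat (ws ! i))"
    by (simp add: rat_grid_measure_def ws_def)
  also have "\<dots> = grid_measure a b N (\<lambda>i. T i - T (Suc i))"
    using nth r by (intro grid_measure_cong) (simp add: of_rat_diff)
  finally show thesis by (rule that)
qed

text \<open>Rounding the survival values up by at least \<open>1/M\<close> leaves a margin that persists on an
  open neighbourhood of \<open>p\<close>.\<close>

lemma rat_grid_measure_above:
  assumes "a < b" "p \<in> Delta a b" "openin (weak_top a b) U" "p \<in> U"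
  obtains ws W where "rat_grid_measure a b ws \<in> U" "openin (weak_top a b) W" "p \<in> W"
    "\<And>q. q \<in> W \<Longrightarrow> fosd (rat_grid_measure a b ws) q"
proof -
  obtain H and e :: real where H: "finite H" "\<And>h. h \<in> H \<Longrightarrow> bounded_continuous h" "e > 0"
    and ball: "weak_ball a b p H e \<subseteq> U"
    using weak_ball_subset_openin[OF assms(3,4)] by blast
  obtain N M :: nat where N: "N > 0" and M: "M > 0"
    and near: "\<And>th T. 0 \<le> th \<Longrightarrow> th \<le> 3/2 * ((b - a) / N) \<Longrightarrow> survival_sequence N T \<Longrightarrow>
       (\<And>i. i \<in> {1..N} \<Longrightarrow> \<bar>T i - integral\<^sup>L p (survival_ramp a b N th i)\<bar> \<le> 2 / M) \<Longrightarrow>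
       grid_measure a b N (\<lambda>i. T i - T (Suc i)) \<in> weak_ball a b p H e"
    using grid_measures_in_weak_ball[OF assms(1,2) H] by blast
  define th where "th = 3/2 * ((b - a) / N)"
  define S where "S i = integral\<^sup>L p (survival_ramp a b N th i)" for i
  define T where "T = truncated N (\<lambda>i. round_above M (S i))"
  have S: "0 \<le> S i" "S i \<le> 1" "S (Suc i) \<le> S i" for i
    unfolding S_def using integral_survival_ramp[OF assms(2)] assms(1) N by auto
  have T: "survival_sequence N T"
    unfolding T_def using S round_above_bounds[OF M] round_above_mono
    by (intro survival_sequence_truncated) auto
  obtain ws where ws: "rat_grid_measure a b ws = grid_measure a b N (\<lambda>i. T i - T (Suc i))"
    using rat_grid_measure_of_survival_sequence[OF T] round_above_Rats
    by (metis T_def truncated_def Rats_0 Rats_1)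
  have "grid_measure a b N (\<lambda>i. T i - T (Suc i)) \<in> weak_ball a b p H e"
  proof (rule near[OF _ _ T])
    show "0 \<le> th" "th \<le> 3/2 * ((b - a) / N)" using assms(1) by (simp_all add: th_def)
    fix i assume "i \<in> {1..N}"
    then show "\<bar>T i - integral\<^sup>L p (survival_ramp a b N th i)\<bar> \<le> 2 / M"
      using round_above_bounds(3)[OF M S(2)] by (simp add: T_def truncated_def S_def)
  qed
  then have "rat_grid_measure a b ws \<in> U" using ws ball by auto
  define W where
    "W = {q \<in> Delta a b. \<forall>i\<in>{1..N}. integral\<^sup>L q (survival_ramp a b N th i) \<in> {..< S i + 1 / M}}"
  have "openin (weak_top a b) W"
    unfolding W_def by (intro openin_weak_top_finite bounded_continuous_survival_ramp) auto
  moreover have "p \<in> W"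
    using assms(2) M by (simp add: W_def S_def)
  moreover have "fosd (rat_grid_measure a b ws) q" if "q \<in> W" for q
    unfolding ws
  proof (rule fosd_grid_measure_above[OF assms(1) N _ T])
    show "q \<in> Delta a b" using that by (simp add: W_def)
    fix i assume "i \<in> {1..N}"
    then show "integral\<^sup>L q (survival_ramp a b N (3/2 * ((b - a) / N)) i) \<le> T i"
      using that integral_survival_ramp(2)[of q a b N th i] round_above_bounds(4)[OF M]
      by (auto simp: W_def T_def truncated_def th_def)
  qed
  ultimately show thesis by (rule that[OF \<open>rat_grid_measure a b ws \<in> U\<close>])
qed

lemma rat_grid_measure_below:
  assumes "a < b" "p \<in> Delta a b" "openin (weak_top a b) U" "p \<in> U"
  obtains ws W where "rat_grid_measure a b ws \<in> U" "openin (weak_top a b) W" "p \<in> W"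
    "\<And>q. q \<in> W \<Longrightarrow> fosd q (rat_grid_measure a b ws)"
proof -
  obtain H and e :: real where H: "finite H" "\<And>h. h \<in> H \<Longrightarrow> bounded_continuous h" "e > 0"
    and ball: "weak_ball a b p H e \<subseteq> U"
    using weak_ball_subset_openin[OF assms(3,4)] by blast
  obtain N M :: nat where N: "N > 0" and M: "M > 0"
    and near: "\<And>th T. 0 \<le> th \<Longrightarrow> th \<le> 3/2 * ((b - a) / N) \<Longrightarrow> survival_sequence N T \<Longrightarrow>
       (\<And>i. i \<in> {1..N} \<Longrightarrow> \<bar>T i - integral\<^sup>L p (survival_ramp a b N th i)\<bar> \<le> 2 / M) \<Longrightarrow>
       grid_measure a b N (\<lambda>i. T i - T (Suc i)) \<in> weak_ball a b p H e"
    using grid_measures_in_weak_ball[OF assms(1,2) H] by blast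
  define S where "S i = integral\<^sup>L p (survival_ramp a b N 0 i)" for i
  define T where "T = truncated N (\<lambda>i. round_below M (S i))"
  have S: "0 \<le> S i" "S i \<le> 1" "S (Suc i) \<le> S i" for i
    unfolding S_def using integral_survival_ramp[OF assms(2)] assms(1) N by auto
  have T: "survival_sequence N T"
    unfolding T_def using S round_below_bounds[OF M] round_below_mono
    by (intro survival_sequence_truncated) auto
  obtain ws where ws: "rat_grid_measure a b ws = grid_measure a b N (\<lambda>i. T i - T (Suc i))"
    using rat_grid_measure_of_survival_sequence[OF T] round_below_Rats
    by (metis T_def truncated_def Rats_0 Rats_1)
  have "grid_measure a b N (\<lambda>i. T i - T (Suc i)) \<in> weak_ball a b p H e"
  proof (rule near[OF _ _ T])
    show "(0::real) \<le> 0" "0 \<le> 3/2 * ((b - a) / N)" using assms(1) by simp_all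
    fix i assume "i \<in> {1..N}"
    then show "\<bar>T i - integral\<^sup>L p (survival_ramp a b N 0 i)\<bar> \<le> 2 / M"
      using round_below_bounds(3)[OF M S(1)] by (simp add: T_def truncated_def S_def)
  qed
  then have "rat_grid_measure a b ws \<in> U" using ws ball by auto
  define W where
    "W = {q \<in> Delta a b. \<forall>i\<in>{1..N}. integral\<^sup>L q (survival_ramp a b N 0 i) \<in> {S i - 1 / M <..}}"
  have "openin (weak_top a b) W"
    unfolding W_def by (intro openin_weak_top_finite bounded_continuous_survival_ramp) auto
  moreover have "p \<in> W"
    using assms(2) M by (simp add: W_def S_def)
  moreover have "fosd q (rat_grid_measure a b ws)" if "q \<in> W" for q
    unfolding ws
  proof (rule fosd_grid_measure_below[OF assms(1) N _ T])
    show "q \<in> Delta a b" using that by (simp add: W_def)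
    fix i assume "i \<in> {1..N}"
    then show "T i \<le> integral\<^sup>L q (survival_ramp a b N 0 i)"
      using that integral_survival_ramp(1)[of q a b N 0 i] round_below_bounds(4)[OF M]
      by (auto simp: W_def T_def truncated_def)
  qed
  ultimately show thesis by (rule that[OF \<open>rat_grid_measure a b ws \<in> U\<close>])
qed

section \<open>Acts\<close>

lemma topspace_act_top: "topspace (act_top a b) = {f. \<forall>s. f s \<in> Delta a b}"
  by (auto simp: act_top_def topspace_weak_top PiE_UNIV_domain)

lemma weakly_monotone_eq_monotone_wrt:
  "weakly_monotone a b R = monotone_wrt (act_top a b) act_ge R"
  by (simp add: weakly_monotone_def monotone_wrt_def)

lemma dominates_locally_product:
  fixes e :: "'c \<Rightarrow> 'a"
  assumes "dominates_locally T rel (range e)"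
  shows "dominates_locally (product_topology (\<lambda>_::'i::finite. T) UNIV) (\<lambda>f g. \<forall>i. rel (f i) (g i))
    (range (\<lambda>g i. e (g i)))"
  unfolding dominates_locally_def
proof (intro allI impI, elim conjE)
  fix f :: "'i \<Rightarrow> 'a" and U
  assume U: "openin (product_topology (\<lambda>_. T) UNIV) U" "f \<in> U"
  obtain V where V: "f \<in> (\<Pi>\<^sub>E i\<in>UNIV. V i)" "\<forall>i. openin T (V i)" "(\<Pi>\<^sub>E i\<in>UNIV. V i) \<subseteq> U"
    using product_topology_open_contains_basis[OF U] by auto
  have "\<forall>i. \<exists>cW. e (fst cW) \<in> V i \<and> openin T (snd cW) \<and> f i \<in> snd cW \<and>
      (\<forall>z\<in>snd cW. rel (e (fst cW)) z)"
  proof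
    fix i
    have "openin T (V i)" "f i \<in> V i" using V(1,2) by (simp_all add: PiE_iff)
    then obtain d W where "d \<in> range e" "d \<in> V i" "openin T W" "f i \<in> W" "\<And>z. z \<in> W \<Longrightarrow> rel d z"
      using dominates_locallyE[OF assms] by blast
    moreover from \<open>d \<in> range e\<close> obtain c where "d = e c" by blast
    ultimately show "\<exists>cW. e (fst cW) \<in> V i \<and> openin T (snd cW) \<and> f i \<in> snd cW \<and>
        (\<forall>z\<in>snd cW. rel (e (fst cW)) z)"
      by (intro exI[of _ "(c, W)"]) simp
  qed
  then obtain G where G: "\<forall>i. e (fst (G i)) \<in> V i \<and> openin T (snd (G i)) \<and> f i \<in> snd (G i) \<and>
      (\<forall>z\<in>snd (G i). rel (e (fst (G i))) z)"
    by (rule choice[THEN exE])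
  define g where "g i = fst (G i)" for i
  define W where "W i = snd (G i)" for i
  have g: "\<And>i. e (g i) \<in> V i" and W: "\<And>i. openin T (W i)" "\<And>i. f i \<in> W i"
    "\<And>i z. z \<in> W i \<Longrightarrow> rel (e (g i)) z"
    using G by (simp_all add: g_def W_def)
  show "\<exists>d\<in>range (\<lambda>g i. e (g i)) \<inter> U. \<exists>W. openin (product_topology (\<lambda>_. T) UNIV) W \<and>
      f \<in> W \<and> (\<forall>z\<in>W. \<forall>i. rel (d i) (z i))"
  proof (rule bexI[of _ "\<lambda>i. e (g i)"])
    have "openin (product_topology (\<lambda>_. T) UNIV) (\<Pi>\<^sub>E i\<in>UNIV. W i)"
      by (rule product_topology_basis) (simp_all add: W(1))
    moreover have "f \<in> (\<Pi>\<^sub>E i\<in>UNIV. W i)" "\<forall>z\<in>(\<Pi>\<^sub>E i\<in>UNIV. W i). \<forall>i. rel (e (g i)) (z i)"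
      using W(2,3) by (simp_all add: PiE_iff)
    ultimately show "\<exists>W. openin (product_topology (\<lambda>_. T) UNIV) W \<and> f \<in> W \<and>
        (\<forall>z\<in>W. \<forall>i. rel (e (g i)) (z i))"
      by blast
    have "(\<lambda>i. e (g i)) \<in> (\<Pi>\<^sub>E i\<in>UNIV. V i)" using g by (simp add: PiE_iff)
    then show "(\<lambda>i. e (g i)) \<in> range (\<lambda>g i. e (g i)) \<inter> U" using V(3) by blast
  qed
qed

lemma dominates_locally_rat_grid_measures:
  assumes "a < b"
  shows "dominates_locally (weak_top a b) fosd (range (rat_grid_measure a b))"
    and "dominates_locally (weak_top a b) (\<lambda>p q. fosd q p) (range (rat_grid_measure a b))"
proof -
  have p: "p \<in> Delta a b" if "openin (weak_top a b) U" "p \<in> U" for p U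
    using openin_subset[OF that(1)] that(2) by (auto simp: topspace_weak_top)
  show "dominates_locally (weak_top a b) fosd (range (rat_grid_measure a b))"
    unfolding dominates_locally_def
  proof (intro allI impI, elim conjE)
    fix p U assume U: "openin (weak_top a b) U" "p \<in> U"
    obtain ws W where "rat_grid_measure a b ws \<in> U" "openin (weak_top a b) W" "p \<in> W"
      "\<And>q. q \<in> W \<Longrightarrow> fosd (rat_grid_measure a b ws) q"
      using rat_grid_measure_above[OF assms p[OF U] U] by blast
    then show "\<exists>d\<in>range (rat_grid_measure a b) \<inter> U. \<exists>W. openin (weak_top a b) W \<and> p \<in> W \<and>
        (\<forall>z\<in>W. fosd d z)"
      by blast
  qed
  show "dominates_locally (weak_top a b) (\<lambda>p q. fosd q p) (range (rat_grid_measure a b))"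
    unfolding dominates_locally_def
  proof (intro allI impI, elim conjE)
    fix p U assume U: "openin (weak_top a b) U" "p \<in> U"
    obtain ws W where "rat_grid_measure a b ws \<in> U" "openin (weak_top a b) W" "p \<in> W"
      "\<And>q. q \<in> W \<Longrightarrow> fosd q (rat_grid_measure a b ws)"
      using rat_grid_measure_below[OF assms p[OF U] U] by blast
    then show "\<exists>d\<in>range (rat_grid_measure a b) \<inter> U. \<exists>W. openin (weak_top a b) W \<and> p \<in> W \<and>
        (\<forall>z\<in>W. fosd z d)"
      by blast
  qed
qed

definition rat_grid_act :: "real \<Rightarrow> real \<Rightarrow> ('s \<Rightarrow> rat list) \<Rightarrow> 's \<Rightarrow> real measure" where
  "rat_grid_act a b g = (\<lambda>s. rat_grid_measure a b (g s))"

lemma brackets_rat_grid_acts: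
  assumes "a < b"
  shows "brackets (act_top a b) act_ge (range (rat_grid_act a b :: ('s::finite \<Rightarrow> rat list) \<Rightarrow> _))"
proof -
  have "range (rat_grid_act a b) \<subseteq> topspace (act_top a b :: ('s \<Rightarrow> real measure) topology)"
    using assms by (auto simp: topspace_act_top rat_grid_act_def rat_grid_measure_in_Delta)
  moreover have "dominates_locally (act_top a b) act_ge (range (rat_grid_act a b :: ('s \<Rightarrow> rat list) \<Rightarrow> _))"
    using dominates_locally_product[OF dominates_locally_rat_grid_measures(1)[OF assms]]
    by (simp add: act_top_def act_ge_def[abs_def] rat_grid_act_def[abs_def])
  moreover have "dominates_locally (act_top a b) (\<lambda>f g. act_ge g f)
      (range (rat_grid_act a b :: ('s \<Rightarrow> rat list) \<Rightarrow> _))"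
    using dominates_locally_product[OF dominates_locally_rat_grid_measures(2)[OF assms]]
    by (simp add: act_top_def act_ge_def[abs_def] rat_grid_act_def[abs_def])
  ultimately show ?thesis by (simp add: brackets_def)
qed

theorem mainTheorem7:
  fixes a b :: real
  assumes "a < b"
  shows "\<exists>B :: nat \<Rightarrow> ('s::finite \<Rightarrow> real measure) set.
    (\<forall>i\<ge>1. \<exists>x y. x \<in> topspace (act_top a b) \<and> y \<in> topspace (act_top a b) \<and> B i = {x, y})
    \<and> (act_top a b) closure_of (\<Union>i\<in>{1..}. B i) = topspace (act_top a b)
    \<and> (\<forall>x\<in>(\<Union>i\<in>{1..}. B i). \<forall>y\<in>(\<Union>i\<in>{1..}. B i). \<exists>k\<ge>1. B k = {x, y})
    \<and> (\<forall>Rstar R.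
         preference (act_top a b) Rstar \<and> weakly_monotone a b Rstar
         \<and> (\<forall>k\<ge>1. preference (act_top a b) (R k) \<and> weakly_monotone a b (R k)
               \<and> (\<forall>i\<in>{1..k}. choice (R k) (B i) = choice Rstar (B i)))
         \<longrightarrow> closed_conv (prod_topology (act_top a b) (act_top a b)) R Rstar)"
proof -
  let ?e = "rat_grid_act a b :: ('s \<Rightarrow> rat list) \<Rightarrow> 's \<Rightarrow> real measure"
  have D: "brackets (act_top a b) act_ge (range ?e)"
    using assms by (rule brackets_rat_grid_acts)
  show ?thesis
  proof (intro exI[of _ "pair_experiments ?e"] conjI allI impI ballI)
    fix i :: nat assume "i \<ge> 1"
    then obtain j where "i = Suc j" by (cases i) auto
    then show "\<exists>x y. x \<in> topspace (act_top a b) \<and> y \<in> topspace (act_top a b) \<and>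
        pair_experiments ?e i = {x, y}"
      using pair_experiments_Suc[of ?e j] brackets_subset[OF D] by blast
  next
    show "act_top a b closure_of (\<Union>i\<in>{1..}. pair_experiments ?e i) = topspace (act_top a b)"
      unfolding Union_pair_experiments using D
      by (intro closure_of_eq_topspace_if_dominates_locally[of _ act_ge]) (simp add: brackets_def)
  next
    fix x y assume "x \<in> (\<Union>i\<in>{1..}. pair_experiments ?e i)" "y \<in> (\<Union>i\<in>{1..}. pair_experiments ?e i)"
    then obtain c1 c2 where "x = ?e c1" "y = ?e c2" unfolding Union_pair_experiments by blast
    then show "\<exists>k\<ge>1. pair_experiments ?e k = {x, y}"
      using pair_experiments_to_nat[of ?e c1 c2] by (intro exI[of _ "Suc (to_nat (c1, c2))"]) auto
  next
    fix Rstar R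
    assume "preference (act_top a b) Rstar \<and> weakly_monotone a b Rstar
      \<and> (\<forall>k\<ge>1. preference (act_top a b) (R k) \<and> weakly_monotone a b (R k)
            \<and> (\<forall>i\<in>{1..k}. choice (R k) (pair_experiments ?e i) = choice Rstar (pair_experiments ?e i)))"
    then show "closed_conv (prod_topology (act_top a b) (act_top a b)) R Rstar"
      unfolding weakly_monotone_eq_monotone_wrt by (intro closed_conv_pair_experiments[OF D]) auto
  qed
qed

end
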